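(* Let $f$ be an $n$-variable Boolean function. Then $${AI}(f)=\min\Big(\min_{1\le k\le n}\mu_k(f+1),\ \min_{1\le k\le n}\mu_k(f)\Big).$$
   Context: An $n$-variable Boolean function is a map $\mathbb{F}_2^n\to\mathbb{F}_2$, with algebraic degree $\deg$ the degree of its algebraic normal form. ${LDA}(h)$ is the minimum algebraic degree of a nonzero $g$ with $h\cdot g=0$, and ${AI}(f)=\min({LDA}(f),{LDA}(1+f))$. For $1\le k\le n$, ${MUL}_k(h)=\{h\cdot g:\deg(g)\le k\}$ and $\mu_k(h)$ is the minimum algebraic degree of the nonzero elements of ${MUL}_k(h)$. *)

theory Defs
  imports "HOL-Analysis.Analysis" "HOL-Library.Extended_Nat"
begin

text \<open>Points of F_2^n are vectors bool^'n (n = CARD('n)); an n-variable Boolean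
function is a map bool^'n => bool. Addition in F_2 is xor, multiplication is conjunction,
the constant 0 is False and 1 + f is the pointwise negation of f.\<close>

text \<open>Evaluation of an algebraic normal form with coefficient family a (a S = True means
the monomial prod_{i in S} x_i occurs): the F_2-sum of the occurring monomials at x.\<close>
definition anf_eval :: "('n::finite set \<Rightarrow> bool) \<Rightarrow> bool^'n \<Rightarrow> bool" where
  "anf_eval a x = odd (card {S. a S \<and> (\<forall>i\<in>S. x $ i)})"

definition alg_deg :: "(bool^'n::finite \<Rightarrow> bool) \<Rightarrow> nat" where
  "alg_deg f = (LEAST d. \<exists>a. (\<forall>S. a S \<longrightarrow> card S \<le> d) \<and> f = anf_eval a)"

definition bf_zero :: "bool^'n::finite \<Rightarrow> bool" where
  "bf_zero = (\<lambda>x. False)"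

definition bf_mul :: "(bool^'n::finite \<Rightarrow> bool) \<Rightarrow> (bool^'n \<Rightarrow> bool) \<Rightarrow> (bool^'n \<Rightarrow> bool)" where
  "bf_mul h g = (\<lambda>x. h x \<and> g x)"

definition bf_add1 :: "(bool^'n::finite \<Rightarrow> bool) \<Rightarrow> (bool^'n \<Rightarrow> bool)" where
  "bf_add1 f = (\<lambda>x. \<not> f x)"

text \<open>Minimum over an empty set is infinity (Inf {} = \<infinity> in enat).\<close>
definition LDA :: "(bool^'n::finite \<Rightarrow> bool) \<Rightarrow> enat" where
  "LDA h = (INF g \<in> {g. g \<noteq> bf_zero \<and> bf_mul h g = bf_zero}. enat (alg_deg g))"

definition AI :: "(bool^'n::finite \<Rightarrow> bool) \<Rightarrow> enat" where
  "AI f = min (LDA f) (LDA (bf_add1 f))"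

definition MUL :: "nat \<Rightarrow> (bool^'n::finite \<Rightarrow> bool) \<Rightarrow> (bool^'n \<Rightarrow> bool) set" where
  "MUL k h = {bf_mul h g | g. alg_deg g \<le> k}"

definition mu :: "nat \<Rightarrow> (bool^'n::finite \<Rightarrow> bool) \<Rightarrow> enat" where
  "mu k h = (INF p \<in> {p \<in> MUL k h. p \<noteq> bf_zero}. enat (alg_deg p))"

end

theory Submission
  imports Defs
begin

text \<open>A nonzero multiple \<open>h g\<close> of \<open>h\<close> is annihilated by \<open>1 + h\<close>, so
\<open>LDA(1 + h) \<le> \<mu>\<^sub>k(h)\<close> for every \<open>k\<close>. Conversely a nonzero annihilator \<open>g\<close> of \<open>h\<close>
satisfies \<open>g = (1 + h) g\<close>, and every Boolean function has degree at most \<open>n\<close>, so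
\<open>g \<in> MUL\<^sub>n(1 + h)\<close> and \<open>\<mu>\<^sub>n(1 + h) \<le> LDA(h)\<close>. Hence \<open>min\<^sub>k \<mu>\<^sub>k(1 + h) = LDA(h)\<close>,
and the theorem is this identity for \<open>h = f\<close> and \<open>h = 1 + f\<close>. The degree bound needs
the existence of an ANF, which follows from the ANF of a point indicator:
\<open>[x = y] = \<Sum>\<^bsub>S \<supseteq> supp y\<^esub> x\<^sup>S\<close>, because the number of sets between \<open>supp y\<close> and
\<open>supp x\<close> is \<open>2\<^sup>m\<close> with \<open>m = |supp x - supp y|\<close>.\<close>

lemma odd_card_sym_diff:
  assumes "finite A" "finite B"
  shows "odd (card (sym_diff A B)) \<longleftrightarrow> odd (card A) \<noteq> odd (card B)"
proof -
  have "sym_diff A B = (A \<union> B) - (A \<inter> B)" by blast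
  moreover have "A \<inter> B \<subseteq> A \<union> B" by blast
  ultimately have "card (sym_diff A B) + card (A \<inter> B) = card (A \<union> B)"
    using assms by (simp add: card_Diff_subset card_mono)
  moreover have "card (A \<union> B) + card (A \<inter> B) = card A + card B"
    using assms by (rule card_Un_Int[symmetric])
  ultimately show ?thesis by presburger
qed

lemma card_sets_between:
  assumes "Y \<subseteq> X" "finite X"
  shows "card {S. Y \<subseteq> S \<and> S \<subseteq> X} = 2 ^ card (X - Y)"
proof -
  have "bij_betw (\<lambda>S. S - Y) {S. Y \<subseteq> S \<and> S \<subseteq> X} (Pow (X - Y))"
    by (rule bij_betw_byWitness[where f' = "\<lambda>T. T \<union> Y"]) (use assms in auto)
  then show ?thesis
    using assms by (simp add: bij_betw_same_card card_Pow)
qed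

lemma anf_eval_xor:
  "anf_eval (\<lambda>S. a S \<noteq> b S) x \<longleftrightarrow> anf_eval a x \<noteq> anf_eval b x"
proof -
  have "{S. (a S \<noteq> b S) \<and> (\<forall>i\<in>S. x $ i)}
      = sym_diff {S. a S \<and> (\<forall>i\<in>S. x $ i)} {S. b S \<and> (\<forall>i\<in>S. x $ i)}"
    by auto
  then show ?thesis
    unfolding anf_eval_def by (simp only: odd_card_sym_diff finite)
qed

lemma anf_eval_point:
  fixes y :: "bool^'n::finite"
  shows "anf_eval (\<lambda>S. {i. y $ i} \<subseteq> S) x \<longleftrightarrow> x = y"
proof -
  let ?Y = "{i. y $ i}" and ?X = "{i. x $ i}"
  have monomials: "{S. ?Y \<subseteq> S \<and> (\<forall>i\<in>S. x $ i)} = {S. ?Y \<subseteq> S \<and> S \<subseteq> ?X}" by auto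
  show ?thesis
  proof (cases "?Y \<subseteq> ?X")
    case True
    then have "anf_eval (\<lambda>S. ?Y \<subseteq> S) x \<longleftrightarrow> ?X - ?Y = {}"
      by (simp add: anf_eval_def monomials card_sets_between)
    also have "\<dots> \<longleftrightarrow> x = y"
      using True by (auto simp: vec_eq_iff)
    finally show ?thesis .
  next
    case False
    then have none: "{S. ?Y \<subseteq> S \<and> S \<subseteq> ?X} = {}" by blast
    have "\<not> anf_eval (\<lambda>S. ?Y \<subseteq> S) x"
      unfolding anf_eval_def monomials none by simp
    with False show ?thesis by blast
  qed
qed

lemma anf_eval_indicator_exists:
  fixes A :: "(bool^'n::finite) set"
  shows "\<exists>a. anf_eval a = (\<lambda>x. x \<in> A)"
  using finite[of A]
proof (induction A rule: finite_induct)
  case empty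
  have "anf_eval (\<lambda>S. False) = (\<lambda>x. x \<in> {})" by (auto simp: anf_eval_def)
  then show ?case by blast
next
  case (insert y A)
  then obtain a where "anf_eval a = (\<lambda>x. x \<in> A)" by blast
  with \<open>y \<notin> A\<close> have "anf_eval (\<lambda>S. a S \<noteq> ({i. y $ i} \<subseteq> S)) = (\<lambda>x. x \<in> insert y A)"
    unfolding fun_eq_iff anf_eval_xor anf_eval_point by blast
  then show ?case by blast
qed

lemma surj_anf_eval: "surj (anf_eval :: ('n::finite set \<Rightarrow> bool) \<Rightarrow> bool^'n \<Rightarrow> bool)"
proof (unfold surj_def, intro allI)
  fix f :: "bool^'n \<Rightarrow> bool"
  from anf_eval_indicator_exists[of "Collect f"] show "\<exists>a. f = anf_eval a"
    by auto
qed

lemma alg_deg_le_CARD: "alg_deg (g :: bool^'n::finite \<Rightarrow> bool) \<le> CARD('n)"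
proof -
  obtain a where "g = anf_eval a" using surj_anf_eval by (metis surjD)
  moreover have "card S \<le> CARD('n)" for S :: "'n set" by (simp add: card_mono)
  ultimately show ?thesis
    unfolding alg_deg_def by (blast intro: Least_le)
qed

lemma bf_add1_bf_add1 [simp]: "bf_add1 (bf_add1 f) = f"
  by (simp add: bf_add1_def)

lemma LDA_add1_le_mu: "LDA (bf_add1 h) \<le> mu k h"
  unfolding mu_def LDA_def
proof (rule INF_greatest)
  fix p assume "p \<in> {p \<in> MUL k h. p \<noteq> bf_zero}"
  then obtain g where "p = bf_mul h g" "p \<noteq> bf_zero" by (auto simp: MUL_def)
  then have "p \<in> {g. g \<noteq> bf_zero \<and> bf_mul (bf_add1 h) g = bf_zero}"
    by (auto simp: bf_mul_def bf_add1_def bf_zero_def)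
  then show "(INF g \<in> {g. g \<noteq> bf_zero \<and> bf_mul (bf_add1 h) g = bf_zero}. enat (alg_deg g))
      \<le> enat (alg_deg p)"
    by (rule INF_lower)
qed

lemma mu_CARD_add1_le_LDA: "mu CARD('n) (bf_add1 h) \<le> LDA (h :: bool^'n::finite \<Rightarrow> bool)"
  unfolding mu_def LDA_def
proof (rule INF_greatest)
  fix g assume g: "g \<in> {g. g \<noteq> bf_zero \<and> bf_mul h g = bf_zero}"
  then have "g = bf_mul (bf_add1 h) g"
    by (auto simp: bf_mul_def bf_add1_def bf_zero_def fun_eq_iff)
  with g alg_deg_le_CARD[of g] have "g \<in> {p \<in> MUL CARD('n) (bf_add1 h). p \<noteq> bf_zero}"
    unfolding MUL_def by blast
  then show "(INF p \<in> {p \<in> MUL CARD('n) (bf_add1 h). p \<noteq> bf_zero}. enat (alg_deg p))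
      \<le> enat (alg_deg g)"
    by (rule INF_lower)
qed

lemma INF_mu_add1_eq_LDA:
  "(INF k \<in> {1..CARD('n)}. mu k (bf_add1 h)) = LDA (h :: bool^'n::finite \<Rightarrow> bool)"
proof (rule antisym)
  have "CARD('n) \<in> {1..CARD('n)}" by (simp add: Suc_leI)
  then have "(INF k \<in> {1..CARD('n)}. mu k (bf_add1 h)) \<le> mu CARD('n) (bf_add1 h)"
    by (rule INF_lower)
  also have "\<dots> \<le> LDA h" by (rule mu_CARD_add1_le_LDA)
  finally show "(INF k \<in> {1..CARD('n)}. mu k (bf_add1 h)) \<le> LDA h" .
  show "LDA h \<le> (INF k \<in> {1..CARD('n)}. mu k (bf_add1 h))"
    using LDA_add1_le_mu[of "bf_add1 h"] by (simp add: INF_greatest)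
qed

theorem proposition10:
  fixes f :: "bool^'n::finite \<Rightarrow> bool"
  shows "AI f = min (INF k \<in> {1..CARD('n)}. mu k (bf_add1 f)) (INF k \<in> {1..CARD('n)}. mu k f)"
  using INF_mu_add1_eq_LDA[of f] INF_mu_add1_eq_LDA[of "bf_add1 f"]
  by (simp add: AI_def)

end
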